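(* Let $\mathcal G=(V,E,r)$ be a graph and $k\ge2$. (1) $\rho_k(\mathbf A(\mathcal G))\le (k-1)|V|+1$. (2) Equality holds in (1) if and only if $\mathcal G$ contains $k$ edge-disjoint spanning trees. In particular, in case of equality the graph $\mathcal G$ has edge-connectivity at least $k$.
   Context: A graph $\mathcal G=(V,E,r)$ consists of a finite vertex set $V$, a finite edge set $E$ disjoint from $V$, and a map $r$ assigning to each edge a two-element subset of $V$; multiple edges allowed, no loops. An agglomeration on $\mathcal G$ is a function $a\colon V\cup E\to\mathbb N_0$ with $a(v)\ge a(e)$ whenever $v$ is incident with $e$; $\mathbf A(\mathcal G)$ is the monoid of agglomerations under pointwise addition. For a reduced atomic monoid $H$ and $a\in H$, $\mathsf L(a)$ is the set of $n$ such that $a$ is a sum of $n$ atoms, and for $k\ge2$ the refined elasticity is $\rho_k(H)=\sup\{\sup\mathsf L(a): a\in H,\ k\in\mathsf L(a)\}$. *)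

theory Defs
  imports Main "HOL-Library.Function_Algebras" "HOL-Library.Extended_Nat"
begin

text \<open>A graph (V,E,r): finite vertex set, finite edge set, each edge mapped to a
two-element subset of V (multiple edges allowed, no loops). Vertices and edges live
in different types, so V and E are automatically disjoint.\<close>

definition graph :: "'v set \<Rightarrow> 'e set \<Rightarrow> ('e \<Rightarrow> 'v set) \<Rightarrow> bool" where
  "graph V E r \<longleftrightarrow> finite V \<and> finite E \<and> (\<forall>e\<in>E. r e \<subseteq> V \<and> card (r e) = 2)"

definition agglomeration :: "'v set \<Rightarrow> 'e set \<Rightarrow> ('e \<Rightarrow> 'v set) \<Rightarrow> ('v + 'e \<Rightarrow> nat) \<Rightarrow> bool" where
  "agglomeration V E r a \<longleftrightarrow>
     (\<forall>x. x \<notin> Inl ` V \<union> Inr ` E \<longrightarrow> a x = 0) \<and>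
     (\<forall>e\<in>E. \<forall>v\<in>r e. a (Inr e) \<le> a (Inl v))"

definition agg_atom :: "'v set \<Rightarrow> 'e set \<Rightarrow> ('e \<Rightarrow> 'v set) \<Rightarrow> ('v + 'e \<Rightarrow> nat) \<Rightarrow> bool" where
  "agg_atom V E r a \<longleftrightarrow> agglomeration V E r a \<and> a \<noteq> 0 \<and>
     (\<forall>b c. agglomeration V E r b \<and> agglomeration V E r c \<and> a = b + c \<longrightarrow> b = 0 \<or> c = 0)"

definition agg_lengths :: "'v set \<Rightarrow> 'e set \<Rightarrow> ('e \<Rightarrow> 'v set) \<Rightarrow> ('v + 'e \<Rightarrow> nat) \<Rightarrow> nat set" where
  "agg_lengths V E r a = {n. \<exists>xs. length xs = n \<and> (\<forall>x\<in>set xs. agg_atom V E r x) \<and> sum_list xs = a}"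

definition agg_rho :: "'v set \<Rightarrow> 'e set \<Rightarrow> ('e \<Rightarrow> 'v set) \<Rightarrow> nat \<Rightarrow> enat" where
  "agg_rho V E r k = Sup {Sup (enat ` agg_lengths V E r a) | a.
       agglomeration V E r a \<and> k \<in> agg_lengths V E r a}"

definition adj :: "('e \<Rightarrow> 'v set) \<Rightarrow> 'e set \<Rightarrow> 'v \<Rightarrow> 'v \<Rightarrow> bool" where
  "adj r T u v \<longleftrightarrow> (\<exists>e\<in>T. r e = {u, v})"

definition connected_sub :: "'v set \<Rightarrow> ('e \<Rightarrow> 'v set) \<Rightarrow> 'e set \<Rightarrow> bool" where
  "connected_sub V r T \<longleftrightarrow> (\<forall>u\<in>V. \<forall>v\<in>V. (adj r T)\<^sup>*\<^sup>* u v)"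

definition is_cycle :: "('e \<Rightarrow> 'v set) \<Rightarrow> 'e set \<Rightarrow> 'e list \<Rightarrow> 'v list \<Rightarrow> bool" where
  "is_cycle r T es vs \<longleftrightarrow> es \<noteq> [] \<and> length vs = Suc (length es) \<and> distinct es \<and>
     set es \<subseteq> T \<and> hd vs = last vs \<and> distinct (butlast vs) \<and>
     (\<forall>i<length es. r (es ! i) = {vs ! i, vs ! Suc i})"

definition acyclic_sub :: "('e \<Rightarrow> 'v set) \<Rightarrow> 'e set \<Rightarrow> bool" where
  "acyclic_sub r T \<longleftrightarrow> \<not> (\<exists>es vs. is_cycle r T es vs)"

definition spanning_tree :: "'v set \<Rightarrow> 'e set \<Rightarrow> ('e \<Rightarrow> 'v set) \<Rightarrow> 'e set \<Rightarrow> bool" where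
  "spanning_tree V E r T \<longleftrightarrow> T \<subseteq> E \<and> connected_sub V r T \<and> acyclic_sub r T"

definition has_k_edge_disjoint_spanning_trees ::
  "'v set \<Rightarrow> 'e set \<Rightarrow> ('e \<Rightarrow> 'v set) \<Rightarrow> nat \<Rightarrow> bool" where
  "has_k_edge_disjoint_spanning_trees V E r k \<longleftrightarrow>
     (\<exists>Ts :: nat \<Rightarrow> 'e set. (\<forall>i<k. spanning_tree V E r (Ts i)) \<and>
        (\<forall>i<k. \<forall>j<k. i \<noteq> j \<longrightarrow> Ts i \<inter> Ts j = {}))"

definition edge_connectivity_ge :: "'v set \<Rightarrow> 'e set \<Rightarrow> ('e \<Rightarrow> 'v set) \<Rightarrow> nat \<Rightarrow> bool" where
  "edge_connectivity_ge V E r k \<longleftrightarrow>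
     (\<forall>F. F \<subseteq> E \<and> card F < k \<longrightarrow> connected_sub V r (E - F))"

end

theory Submission
  imports Defs
begin

text \<open>
  Atoms of A(G) take values in {0, 1} and are exactly the indicator functions of connected
  subgraphs (W, T) of G. Let A_1 + ... + A_k = B_1 + ... + B_n be two factorisations into atoms,
  and let W_i be the vertex set of B_i. Every edge of A_j is an edge of some B_i, so the vertex
  set of A_j lies in a single component of the hypergraph with hyperedges W_1, ..., W_n. As a
  hyperedge W_i merges at most |W_i| - 1 components, counting vertices on both sides gives
  n <= (k - 1) |V| + 1. Equality forces every A_j to span V and no edge to carry weight 2, so
  the edge sets of the A_j are pairwise disjoint and connected on V, and each contains a spanning
  tree. Conversely, k edge-disjoint spanning trees T_j give the second factorisation
  sum_j 1(V, T_j) = 1(V, T_1 \<union> ... \<union> T_k) + (k - 1) sum_v 1({v}, {}).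
  Deleting fewer than k edges misses one of the trees, whence edge-connectivity at least k.
\<close>

section \<open>Linking points through common blocks\<close>

lemma rtranclp_lift:
  assumes "\<And>x y. R x y \<Longrightarrow> S\<^sup>*\<^sup>* x y" and "R\<^sup>*\<^sup>* x y"
  shows "S\<^sup>*\<^sup>* x y"
  using assms(2) by induction (auto intro: rtranclp_trans assms(1))

definition in_common_block :: "(nat \<Rightarrow> 'a set) \<Rightarrow> nat \<Rightarrow> 'a \<Rightarrow> 'a \<Rightarrow> bool" where
  "in_common_block W n x y \<longleftrightarrow> (\<exists>i<n. x \<in> W i \<and> y \<in> W i)"

lemma in_common_block_Suc:
  "in_common_block W (Suc n) x y \<longleftrightarrow> in_common_block W n x y \<or> x \<in> W n \<and> y \<in> W n"
  by (auto simp: in_common_block_def less_Suc_eq)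

lemma in_common_block_Suc_rtranclp:
  assumes "(in_common_block W (Suc n))\<^sup>*\<^sup>* x y"
  shows "(in_common_block W n)\<^sup>*\<^sup>* x y \<or>
    (\<exists>z\<in>W n. (in_common_block W n)\<^sup>*\<^sup>* x z) \<and> (\<exists>z\<in>W n. (in_common_block W n)\<^sup>*\<^sup>* z y)"
  using assms
proof (induction rule: converse_rtranclp_induct)
  case base
  then show ?case by simp
next
  case (step x x')
  then show ?case
    unfolding in_common_block_Suc by (auto intro: converse_rtranclp_into_rtranclp)
qed

text \<open>
  Blocks W i are hyperedges; adding one hyperedge merges at most card (W i) - 1 components.
\<close>

lemma card_le_card_reps_plus_blocks:
  assumes "finite R" and "\<And>i. i < n \<Longrightarrow> finite (W i)"
    and "\<And>x. x \<in> X \<Longrightarrow> \<exists>\<rho>\<in>R. (in_common_block W n)\<^sup>*\<^sup>* x \<rho>"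
  shows "card X \<le> card R + (\<Sum>i<n. card (W i) - 1)"
  using assms
proof (induction n arbitrary: R)
  case 0
  then have "X \<subseteq> R"
    by (auto simp: in_common_block_def elim: converse_rtranclpE)
  then show ?case
    using 0 by (simp add: card_mono)
next
  case (Suc n)
  let ?Z = "{z \<in> W n. \<exists>\<rho>\<in>R. (in_common_block W n)\<^sup>*\<^sup>* z \<rho>}"
  obtain w where w_Z: "?Z \<noteq> {} \<Longrightarrow> w \<in> ?Z" and w_W: "W n \<noteq> {} \<Longrightarrow> w \<in> W n"
    by (cases "?Z = {}") blast+
  define R' where "R' = R \<union> (W n - {w})"
  have "\<exists>\<rho>\<in>R'. (in_common_block W n)\<^sup>*\<^sup>* x \<rho>" if "x \<in> X" for x
  proof -
    obtain \<rho> where "\<rho> \<in> R" and "(in_common_block W (Suc n))\<^sup>*\<^sup>* x \<rho>"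
      using Suc.prems(3) \<open>x \<in> X\<close> by blast
    from in_common_block_Suc_rtranclp[OF this(2)] \<open>\<rho> \<in> R\<close> show ?thesis
    proof (elim disjE conjE bexE)
      fix z z' assume "z \<in> W n" "(in_common_block W n)\<^sup>*\<^sup>* x z"
        and "z' \<in> W n" "(in_common_block W n)\<^sup>*\<^sup>* z' \<rho>"
      then have "w \<in> ?Z"
        using w_Z \<open>\<rho> \<in> R\<close> by blast
      then show ?thesis
        using \<open>z \<in> W n\<close> \<open>(in_common_block W n)\<^sup>*\<^sup>* x z\<close>
        by (cases "z = w") (auto simp: R'_def intro: rtranclp_trans)
    qed (auto simp: R'_def)
  qed
  then have "card X \<le> card R' + (\<Sum>i<n. card (W i) - 1)"
    using Suc by (simp add: R'_def)
  moreover have "card R' \<le> card R + (card (W n) - 1)"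
    using card_Un_le[of R "W n - {w}"] w_W by (force simp: R'_def card_Diff_singleton_if)
  ultimately show ?case
    by simp
qed

lemma card_add_num_blocks_le:
  assumes "finite R" and "\<And>i. i < n \<Longrightarrow> finite (W i) \<and> W i \<noteq> {}"
    and "\<And>x. x \<in> X \<Longrightarrow> \<exists>\<rho>\<in>R. (in_common_block W n)\<^sup>*\<^sup>* x \<rho>"
  shows "card X + n \<le> card R + (\<Sum>i<n. card (W i))"
proof -
  have "(\<Sum>i<n. card (W i) - 1) + n = (\<Sum>i<n. card (W i))"
    using assms(2) by (induction n) (auto simp: Suc_le_eq card_gt_0_iff)
  then show ?thesis
    using card_le_card_reps_plus_blocks[of R n W X] assms by fastforce
qed

lemma in_common_block_remove_shared:
  assumes "i < n" and "l < n" and "i \<noteq> l" and "u \<noteq> v"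
    and "u \<in> W i" and "v \<in> W i" and "u \<in> W l"
    and "(in_common_block W n)\<^sup>*\<^sup>* x y"
  shows "(in_common_block (W(l := W l - {v})) n)\<^sup>*\<^sup>* x y"
  using assms(8)
proof (rule rtranclp_lift[rotated])
  let ?W' = "W(l := W l - {v})"
  have to_u: "in_common_block ?W' n z u \<and> in_common_block ?W' n u z" if "z \<in> W l" for z
  proof (cases "z = v")
    case True
    then show ?thesis
      using assms(1,3,5,6) by (auto simp: in_common_block_def)
  next
    case False
    then show ?thesis
      using assms(2,4,7) that unfolding in_common_block_def by force
  qed
  fix x y assume "in_common_block W n x y"
  then obtain m where "m < n" and "x \<in> W m" and "y \<in> W m"
    by (auto simp: in_common_block_def)
  show "(in_common_block ?W' n)\<^sup>*\<^sup>* x y"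
  proof (cases "m = l")
    case True
    then show ?thesis
      using to_u \<open>x \<in> W m\<close> \<open>y \<in> W m\<close>
      by (meson converse_rtranclp_into_rtranclp r_into_rtranclp)
  next
    case False
    then have "in_common_block ?W' n x y"
      using \<open>m < n\<close> \<open>x \<in> W m\<close> \<open>y \<in> W m\<close> by (auto simp: in_common_block_def)
    then show ?thesis
      by simp
  qed
qed

section \<open>Connectivity and spanning trees\<close>

lemma rtranclp_adj_sym:
  assumes "(adj r T)\<^sup>*\<^sup>* x y"
  shows "(adj r T)\<^sup>*\<^sup>* y x"
proof -
  have "symp (adj r T)"
    unfolding adj_def symp_def by (auto simp: insert_commute)
  then show ?thesis
    using sympD[OF symp_rtranclp assms] by blast
qed

lemma connected_sub_mono:
  assumes "T \<subseteq> T'" and "connected_sub V r T"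
  shows "connected_sub V r T'"
proof -
  have "(adj r T)\<^sup>*\<^sup>* \<le> (adj r T')\<^sup>*\<^sup>*"
    by (rule rtranclp_mono) (use assms(1) in \<open>fastforce simp: adj_def\<close>)
  then show ?thesis
    using assms(2) unfolding connected_sub_def by (auto dest: predicate2D)
qed

lemma connected_sub_Diff_edge:
  assumes "connected_sub V r T" and "r e = {u, w}" and "(adj r (T - {e}))\<^sup>*\<^sup>* u w"
  shows "connected_sub V r (T - {e})"
proof -
  have bypass: "(adj r (T - {e}))\<^sup>*\<^sup>* x y" if xy: "adj r T x y" for x y
  proof (cases "r e = {x, y}")
    case True
    with assms(2) have "x = u \<and> y = w \<or> x = w \<and> y = u"
      by (simp add: doubleton_eq_iff)
    then show ?thesis
      using assms(3) rtranclp_adj_sym[OF assms(3)] by (elim disjE) simp_all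
  next
    case False
    obtain e' where "e' \<in> T" and "r e' = {x, y}"
      using xy by (auto simp: adj_def)
    with False have "adj r (T - {e}) x y"
      by (auto simp: adj_def)
    then show ?thesis
      by simp
  qed
  show ?thesis
    unfolding connected_sub_def
  proof (intro ballI)
    fix x y assume "x \<in> V" and "y \<in> V"
    with assms(1) have "(adj r T)\<^sup>*\<^sup>* x y"
      by (simp add: connected_sub_def)
    then show "(adj r (T - {e}))\<^sup>*\<^sup>* x y"
      by (rule rtranclp_lift[rotated]) (rule bypass)
  qed
qed

lemma cycle_path_avoiding_first_edge:
  assumes "is_cycle r S es vs" and "m < length es"
  shows "(adj r (S - {hd es}))\<^sup>*\<^sup>* (vs ! 1) (vs ! Suc m)"
  using assms(2)
proof (induction m)
  case 0
  then show ?case by simp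
next
  case (Suc m)
  have "es ! Suc m \<noteq> hd es"
    using assms(1) Suc.prems by (auto simp: is_cycle_def hd_conv_nth nth_eq_iff_index_eq)
  moreover have "es ! Suc m \<in> S"
    using assms(1) Suc.prems by (auto simp: is_cycle_def)
  ultimately have "adj r (S - {hd es}) (vs ! Suc m) (vs ! Suc (Suc m))"
    using assms(1) Suc.prems by (auto simp: is_cycle_def adj_def)
  then show ?case
    using Suc by (auto intro: rtranclp.rtrancl_into_rtrancl)
qed

lemma cycle_first_edge_bypassed:
  assumes "is_cycle r S es vs"
  shows "r (hd es) = {vs ! 0, vs ! 1}" and "(adj r (S - {hd es}))\<^sup>*\<^sup>* (vs ! 0) (vs ! 1)"
proof -
  have "es \<noteq> []" and len: "length vs = Suc (length es)"
    using assms by (auto simp: is_cycle_def)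
  then show "r (hd es) = {vs ! 0, vs ! 1}"
    using assms by (auto simp: is_cycle_def hd_conv_nth)
  have "vs \<noteq> []"
    using len by auto
  then have "vs ! length es = vs ! 0"
    using assms len hd_conv_nth[of vs] last_conv_nth[of vs] by (auto simp: is_cycle_def)
  then have "(adj r (S - {hd es}))\<^sup>*\<^sup>* (vs ! 1) (vs ! 0)"
    using cycle_path_avoiding_first_edge[OF assms, of "length es - 1"] \<open>es \<noteq> []\<close> by simp
  then show "(adj r (S - {hd es}))\<^sup>*\<^sup>* (vs ! 0) (vs ! 1)"
    by (rule rtranclp_adj_sym)
qed

lemma connected_sub_contains_spanning_tree:
  assumes "finite T" and "T \<subseteq> E" and "connected_sub V r T"
  shows "\<exists>S\<subseteq>T. spanning_tree V E r S"
proof -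
  obtain S where S: "S \<subseteq> T" "connected_sub V r S"
    and min: "\<And>S'. S' \<subseteq> T \<Longrightarrow> connected_sub V r S' \<Longrightarrow> card S \<le> card S'"
    using ex_has_least_nat[of "\<lambda>S. S \<subseteq> T \<and> connected_sub V r S" T card] assms(3) by blast
  have "acyclic_sub r S"
    unfolding acyclic_sub_def
  proof (intro notI, elim exE)
    fix es vs assume cycle: "is_cycle r S es vs"
    then have "hd es \<in> S"
      by (auto simp: is_cycle_def)
    moreover have "finite S"
      using S(1) assms(1) by (rule finite_subset)
    ultimately have "card (S - {hd es}) < card S"
      by (rule card_Diff1_less[rotated])
    moreover have "card S \<le> card (S - {hd es})"
      using S connected_sub_Diff_edge[OF S(2) cycle_first_edge_bypassed[OF cycle]]
      by (intro min) auto
    ultimately show False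
      by simp
  qed
  then show ?thesis
    using S assms(2) by (auto simp: spanning_tree_def)
qed

lemma edge_connectivity_ge_if_disjoint_spanning_trees:
  assumes "finite E" and "has_k_edge_disjoint_spanning_trees V E r k"
  shows "edge_connectivity_ge V E r k"
  unfolding edge_connectivity_ge_def
proof (intro allI impI)
  fix F assume F: "F \<subseteq> E \<and> card F < k"
  obtain T where T: "\<And>i. i < k \<Longrightarrow> spanning_tree V E r (T i)"
    and disjoint: "\<And>i j. i < k \<Longrightarrow> j < k \<Longrightarrow> i \<noteq> j \<Longrightarrow> T i \<inter> T j = {}"
    using assms(2) unfolding has_k_edge_disjoint_spanning_trees_def by blast
  have "\<exists>j<k. T j \<inter> F = {}"
  proof (rule ccontr)
    assume all_hit: "\<not> ?thesis"
    define g where "g j = (SOME f. f \<in> T j \<inter> F)" for j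
    have g: "g j \<in> T j \<inter> F" if "j < k" for j
      unfolding g_def by (rule someI_ex) (use all_hit that in blast)
    have "inj_on g {..<k}"
    proof (rule inj_onI)
      fix i j assume "i \<in> {..<k}" and "j \<in> {..<k}" and "g i = g j"
      then have "g i \<in> T i \<inter> T j"
        using g[of i] g[of j] by auto
      then show "i = j"
        using disjoint \<open>i \<in> {..<k}\<close> \<open>j \<in> {..<k}\<close> by auto
    qed
    moreover have "g ` {..<k} \<subseteq> F"
      using g by auto
    moreover have "finite F"
      using F assms(1) by (auto intro: finite_subset)
    ultimately have "card {..<k} \<le> card F"
      by (rule card_inj_on_le)
    then show False
      using F by simp
  qed
  then obtain j where "j < k" and "T j \<inter> F = {}"
    by blast
  then have "T j \<subseteq> E - F" and "connected_sub V r (T j)"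
    using T by (auto simp: spanning_tree_def)
  then show "connected_sub V r (E - F)"
    by (rule connected_sub_mono)
qed

section \<open>Atoms of the monoid of agglomerations\<close>

text \<open>
  Atoms take values in {0, 1} (lemma agg_atom_le_1), so these are the vertex and edge supports.
\<close>

definition atom_vertices :: "'v set \<Rightarrow> ('v + 'e \<Rightarrow> nat) \<Rightarrow> 'v set" where
  "atom_vertices V f = {v \<in> V. f (Inl v) = 1}"

definition atom_edges :: "'e set \<Rightarrow> ('v + 'e \<Rightarrow> nat) \<Rightarrow> 'e set" where
  "atom_edges E f = {e \<in> E. f (Inr e) = 1}"

definition subgraph_indicator :: "'v set \<Rightarrow> 'e set \<Rightarrow> 'v + 'e \<Rightarrow> nat" where
  "subgraph_indicator W T = case_sum (\<lambda>v. of_bool (v \<in> W)) (\<lambda>e. of_bool (e \<in> T))"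

lemma subgraph_indicator_simps [simp]:
  "subgraph_indicator W T (Inl v) = of_bool (v \<in> W)"
  "subgraph_indicator W T (Inr e) = of_bool (e \<in> T)"
  by (simp_all add: subgraph_indicator_def)

definition agg_restrict :: "('e \<Rightarrow> 'v set) \<Rightarrow> 'v set \<Rightarrow> ('v + 'e \<Rightarrow> nat) \<Rightarrow> 'v + 'e \<Rightarrow> nat" where
  "agg_restrict r C a = (\<lambda>y. case y of
     Inl v \<Rightarrow> if v \<in> C then a y else 0
   | Inr e \<Rightarrow> if r e \<subseteq> C then a y else 0)"

lemma agglomeration_restrict:
  assumes "agglomeration V E r a"
  shows "agglomeration V E r (agg_restrict r C a)"
  using assms unfolding agglomeration_def agg_restrict_def by (auto split: sum.split)

lemma agg_restrict_add_restrict_Compl: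
  assumes "graph V E r" and "agglomeration V E r a"
    and closed: "\<And>e. e \<in> E \<Longrightarrow> a (Inr e) \<noteq> 0 \<Longrightarrow> r e \<subseteq> C \<or> r e \<inter> C = {}"
  shows "a = agg_restrict r C a + agg_restrict r (- C) a"
proof
  fix y
  show "a y = (agg_restrict r C a + agg_restrict r (- C) a) y"
  proof (cases y)
    case (Inr e)
    show ?thesis
    proof (cases "e \<in> E \<and> a (Inr e) \<noteq> 0")
      case True
      then have "r e \<noteq> {}"
        using assms(1) by (auto simp: graph_def)
      then show ?thesis
        using closed True Inr by (auto simp: agg_restrict_def)
    next
      case False
      then have "a y = 0"
        using assms(2) Inr by (auto simp: agglomeration_def)
      then show ?thesis
        using Inr by (simp add: agg_restrict_def)
    qed
  qed (simp add: agg_restrict_def)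
qed

lemma agglomeration_support:
  assumes "agglomeration V E r a"
  shows "a (Inl v) \<noteq> 0 \<Longrightarrow> v \<in> V" and "a (Inr e) \<noteq> 0 \<Longrightarrow> e \<in> E"
  using assms by (auto simp: agglomeration_def image_iff)

lemma agg_atom_agglomeration: "agg_atom V E r f \<Longrightarrow> agglomeration V E r f"
  by (simp add: agg_atom_def)

lemma agglomeration_sum_list:
  "(\<And>f. f \<in> set fs \<Longrightarrow> agglomeration V E r f) \<Longrightarrow> agglomeration V E r (sum_list fs)"
  by (induction fs) (auto simp: agglomeration_def intro: add_mono)

lemma agg_atom_le_1:
  assumes "agg_atom V E r f"
  shows "f y \<le> 1"
proof (rule ccontr)
  assume "\<not> f y \<le> 1"
  define g where "g = (\<lambda>y. min (f y) 1)"
  define h where "h = (\<lambda>y. f y - 1)"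
  have "agglomeration V E r g" and "agglomeration V E r h"
    using agg_atom_agglomeration[OF assms]
    unfolding agglomeration_def g_def h_def by (auto simp: min_le_iff_disj diff_le_mono)
  moreover have "f = g + h"
    by (auto simp: g_def h_def fun_eq_iff)
  moreover have "g y \<noteq> 0" and "h y \<noteq> 0"
    using \<open>\<not> f y \<le> 1\<close> by (auto simp: g_def h_def)
  ultimately show False
    using assms unfolding agg_atom_def by (metis zero_fun_apply)
qed

lemma agglomeration_le_vertex:
  assumes "graph V E r" and "agglomeration V E r a" and "a y \<noteq> 0"
  shows "\<exists>v\<in>V. a y \<le> a (Inl v)"
proof (cases y)
  case (Inl v)
  then show ?thesis
    using agglomeration_support(1)[OF assms(2)] assms(3) by auto
next
  case (Inr e)
  then have "e \<in> E"
    using agglomeration_support(2)[OF assms(2)] assms(3) by auto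
  then obtain v where "v \<in> r e" and "r e \<subseteq> V"
    using assms(1) by (fastforce simp: graph_def)
  then show ?thesis
    using assms(2) \<open>e \<in> E\<close> Inr unfolding agglomeration_def by blast
qed

lemma atom_vertices_nonempty:
  assumes "graph V E r" and "agg_atom V E r f"
  shows "atom_vertices V f \<noteq> {}"
proof -
  obtain y where "f y \<noteq> 0"
    using assms(2) by (auto simp: agg_atom_def fun_eq_iff)
  then obtain v where "v \<in> V" and "f y \<le> f (Inl v)"
    using agglomeration_le_vertex[OF assms(1) agg_atom_agglomeration[OF assms(2)]] by blast
  then have "f (Inl v) = 1"
    using \<open>f y \<noteq> 0\<close> agg_atom_le_1[OF assms(2), of "Inl v"] by linarith
  then show ?thesis
    using \<open>v \<in> V\<close> by (auto simp: atom_vertices_def)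
qed

lemma atom_edge_ends:
  assumes "graph V E r" and "agg_atom V E r f" and "e \<in> atom_edges E f"
  shows "r e \<subseteq> atom_vertices V f"
proof
  fix v assume "v \<in> r e"
  moreover have "e \<in> E" and "f (Inr e) = 1"
    using assms(3) by (auto simp: atom_edges_def)
  ultimately have "v \<in> V" and "1 \<le> f (Inl v)"
    using assms(1) agg_atom_agglomeration[OF assms(2)]
    by (auto simp: graph_def agglomeration_def)
  then show "v \<in> atom_vertices V f"
    using agg_atom_le_1[OF assms(2), of "Inl v"] by (simp add: atom_vertices_def)
qed

lemma atom_vertices_connected:
  assumes "graph V E r" and "agg_atom V E r f"
    and "u \<in> atom_vertices V f" and "w \<in> atom_vertices V f"
  shows "(adj r (atom_edges E f))\<^sup>*\<^sup>* u w"
proof (rule ccontr)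
  assume disconnected: "\<not> ?thesis"
  define C where "C = {x. (adj r (atom_edges E f))\<^sup>*\<^sup>* u x}"
  have closed: "r e \<subseteq> C \<or> r e \<inter> C = {}" if "e \<in> E" and "f (Inr e) \<noteq> 0" for e
  proof -
    have "e \<in> atom_edges E f"
      using that agg_atom_le_1[OF assms(2), of "Inr e"] by (simp add: atom_edges_def)
    moreover obtain x y where "r e = {x, y}"
      using assms(1) \<open>e \<in> E\<close> by (auto simp: graph_def card_2_iff)
    ultimately have "adj r (atom_edges E f) x y" and "adj r (atom_edges E f) y x"
      by (auto simp: adj_def insert_commute)
    then show ?thesis
      using \<open>r e = {x, y}\<close> by (auto simp: C_def intro: rtranclp.rtrancl_into_rtrancl)
  qed
  have "f = agg_restrict r C f + agg_restrict r (- C) f"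
    by (rule agg_restrict_add_restrict_Compl[OF assms(1) agg_atom_agglomeration[OF assms(2)] closed])
  moreover have "agg_restrict r C f (Inl u) \<noteq> 0" and "agg_restrict r (- C) f (Inl w) \<noteq> 0"
    using assms(3,4) disconnected by (auto simp: agg_restrict_def C_def atom_vertices_def)
  ultimately show False
    using assms(2) agglomeration_restrict[OF agg_atom_agglomeration[OF assms(2)]]
    unfolding agg_atom_def by (metis zero_fun_apply)
qed

lemma sum_atom_vertices:
  assumes "finite V" and "agg_atom V E r f"
  shows "(\<Sum>v\<in>V. f (Inl v)) = card (atom_vertices V f)"
proof -
  have "f (Inl v) = of_bool (f (Inl v) = 1)" for v
    using agg_atom_le_1[OF assms(2), of "Inl v"] by auto
  then have "(\<Sum>v\<in>V. f (Inl v)) = (\<Sum>v\<in>V. of_bool (f (Inl v) = 1))"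
    by (rule sum.cong[OF refl])
  then show ?thesis
    using assms(1) by (simp add: atom_vertices_def Int_def)
qed

lemma subgraph_indicator_atom:
  assumes "graph V E r" and "W \<subseteq> V" and "W \<noteq> {}" and "T \<subseteq> E"
    and "\<And>e. e \<in> T \<Longrightarrow> r e \<subseteq> W" and "connected_sub W r T"
  shows "agg_atom V E r (subgraph_indicator W T)"
  unfolding agg_atom_def
proof (intro conjI allI impI)
  show "agglomeration V E r (subgraph_indicator W T)"
    using assms(2,4,5) unfolding agglomeration_def subgraph_indicator_def
    by (auto split: sum.split)
  obtain w where "w \<in> W"
    using assms(3) by blast
  then have "subgraph_indicator W T (Inl w) \<noteq> 0"
    by simp
  then show "subgraph_indicator W T \<noteq> 0"
    by (metis zero_fun_apply)
  fix b c
  assume split: "agglomeration V E r b \<and> agglomeration V E r c \<and> subgraph_indicator W T = b + c"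
  then have sum: "b y + c y = subgraph_indicator W T y" for y
    by simp
  have in_W: "x \<in> W" if "b (Inl x) + c (Inl x) \<noteq> 0" for x
    using that sum[of "Inl x"] by (cases "x \<in> W") auto
  show "b = 0 \<or> c = 0"
  proof (rule ccontr)
    assume "\<not> (b = 0 \<or> c = 0)"
    then obtain yb yc where "b yb \<noteq> 0" and "c yc \<noteq> 0"
      by (auto simp: fun_eq_iff)
    then obtain u w where "u \<in> V" "b yb \<le> b (Inl u)" "w \<in> V" "c yc \<le> c (Inl w)"
      using agglomeration_le_vertex[OF assms(1)] split by metis
    then have "b (Inl u) \<noteq> 0" and "c (Inl w) \<noteq> 0"
      using \<open>b yb \<noteq> 0\<close> \<open>c yc \<noteq> 0\<close> by auto
    then have "u \<in> W" and "w \<in> W"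
      using in_W by auto
    have "b (Inl x) \<noteq> 0" if "(adj r T)\<^sup>*\<^sup>* u x" for x
      using that
    proof (induction rule: rtranclp_induct)
      case base
      then show ?case
        using \<open>b (Inl u) \<noteq> 0\<close> .
    next
      case (step x y)
      then obtain e where "e \<in> T" and e: "r e = {x, y}"
        by (auto simp: adj_def)
      then have "e \<in> E" and "x \<in> W"
        using assms(4) assms(5)[OF \<open>e \<in> T\<close>] by auto
      then have "c (Inl x) = 0"
        using step.IH sum[of "Inl x"] by simp
      moreover have "c (Inr e) \<le> c (Inl x)" and "b (Inr e) \<le> b (Inl y)"
        using split \<open>e \<in> E\<close> e unfolding agglomeration_def by simp_all
      ultimately show ?case
        using sum[of "Inr e"] \<open>e \<in> T\<close> by simp
    qed
    then have "b (Inl w) \<noteq> 0"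
      using assms(6) \<open>u \<in> W\<close> \<open>w \<in> W\<close> by (simp add: connected_sub_def)
    then show False
      using \<open>c (Inl w) \<noteq> 0\<close> sum[of "Inl w"] by (cases "w \<in> W") auto
  qed
qed

section \<open>Comparing two factorisations into atoms\<close>

locale atom_factorisations =
  fixes V :: "'v set" and E :: "'e set" and r :: "'e \<Rightarrow> 'v set"
    and k :: nat and A :: "nat \<Rightarrow> 'v + 'e \<Rightarrow> nat"
    and n :: nat and B :: "nat \<Rightarrow> 'v + 'e \<Rightarrow> nat"
  assumes graph: "graph V E r"
    and atom_A: "\<And>j. j < k \<Longrightarrow> agg_atom V E r (A j)"
    and atom_B: "\<And>i. i < n \<Longrightarrow> agg_atom V E r (B i)"
    and same_sum: "\<And>y. (\<Sum>j<k. A j y) = (\<Sum>i<n. B i y)"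
begin

abbreviation U :: "nat \<Rightarrow> 'v set" where
  "U j \<equiv> atom_vertices V (A j)"

abbreviation W :: "nat \<Rightarrow> 'v set" where
  "W i \<equiv> atom_vertices V (B i)"

abbreviation X :: "'v set" where
  "X \<equiv> \<Union>j<k. U j"

lemma finite_V: "finite V"
  using graph by (simp add: graph_def)

lemma finite_X: "finite X"
  using finite_V by (auto simp: atom_vertices_def)

lemma X_subset_V: "X \<subseteq> V"
  by (auto simp: atom_vertices_def)

lemma card_X_pos: "0 < k \<Longrightarrow> 0 < card X"
  using finite_X atom_vertices_nonempty[OF graph atom_A, of 0] by (auto simp: card_gt_0_iff)

lemma sum_card_W_eq_sum_card_U: "(\<Sum>i<n. card (W i)) = (\<Sum>j<k. card (U j))"
proof -
  have "(\<Sum>i<n. card (W i)) = (\<Sum>i<n. \<Sum>v\<in>V. B i (Inl v))"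
    using sum_atom_vertices[OF finite_V atom_B] by simp
  also have "\<dots> = (\<Sum>v\<in>V. \<Sum>j<k. A j (Inl v))"
    by (subst sum.swap) (simp add: same_sum)
  also have "\<dots> = (\<Sum>j<k. card (U j))"
    using sum_atom_vertices[OF finite_V atom_A] by (subst sum.swap) simp
  finally show ?thesis .
qed

lemma sum_card_U_le: "(\<Sum>j<k. card (U j)) \<le> k * card X"
proof -
  have "(\<Sum>j<k. card (U j)) \<le> (\<Sum>j<k. card X)"
    using finite_X by (intro sum_mono card_mono) auto
  then show ?thesis
    by simp
qed

lemma edge_of_A_in_some_B:
  assumes "j < k" and "e \<in> atom_edges E (A j)"
  shows "\<exists>i<n. e \<in> atom_edges E (B i)"
proof -
  have "A j (Inr e) \<le> (\<Sum>i<n. B i (Inr e))"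
    using assms(1) member_le_sum[of j "{..<k}" "\<lambda>j. A j (Inr e)"] by (simp add: same_sum)
  moreover have "A j (Inr e) = 1" and "e \<in> E"
    using assms(2) by (auto simp: atom_edges_def)
  ultimately obtain i where "i < n" and "B i (Inr e) \<noteq> 0"
    by (metis lessThan_iff not_one_le_zero sum.neutral)
  then show ?thesis
    using agg_atom_le_1[OF atom_B, of i "Inr e"] \<open>e \<in> E\<close> by (auto simp: atom_edges_def)
qed

lemma U_linked_by_W:
  assumes "j < k" and "u \<in> U j" and "w \<in> U j"
  shows "(in_common_block W n)\<^sup>*\<^sup>* u w"
  using atom_vertices_connected[OF graph atom_A[OF assms(1)] assms(2,3)]
proof (rule rtranclp_lift[rotated])
  fix x y assume "adj r (atom_edges E (A j)) x y"
  then obtain e where "e \<in> atom_edges E (A j)" and "r e = {x, y}"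
    by (auto simp: adj_def)
  then obtain i where "i < n" and "r e \<subseteq> W i"
    using edge_of_A_in_some_B[OF assms(1)] atom_edge_ends[OF graph atom_B] by blast
  then show "(in_common_block W n)\<^sup>*\<^sup>* x y"
    using \<open>r e = {x, y}\<close> by (intro r_into_rtranclp) (auto simp: in_common_block_def)
qed

lemma W_finite_nonempty: "i < n \<Longrightarrow> finite (W i) \<and> W i \<noteq> {}"
  using finite_V atom_vertices_nonempty[OF graph atom_B] by (simp add: atom_vertices_def)

lemma card_X_add_n_le_if_not_spanning:
  assumes "\<And>j. j < k \<Longrightarrow> U j \<noteq> X"
  shows "card X + n \<le> k * card X"
proof -
  define \<rho> where "\<rho> j = (SOME u. u \<in> U j)" for j
  have \<rho>: "\<rho> j \<in> U j" if "j < k" for j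
    unfolding \<rho>_def using atom_vertices_nonempty[OF graph atom_A[OF that]] by (simp add: some_in_eq)
  have "card X + n \<le> card (\<rho> ` {..<k}) + (\<Sum>j<k. card (U j))"
    unfolding sum_card_W_eq_sum_card_U[symmetric]
  proof (rule card_add_num_blocks_le)
    fix x assume "x \<in> X"
    then obtain j where "j < k" and "x \<in> U j"
      by blast
    moreover have "(in_common_block W n)\<^sup>*\<^sup>* x (\<rho> j)"
      using U_linked_by_W[OF \<open>j < k\<close> \<open>x \<in> U j\<close> \<rho>[OF \<open>j < k\<close>]] .
    ultimately show "\<exists>\<rho>'\<in>\<rho> ` {..<k}. (in_common_block W n)\<^sup>*\<^sup>* x \<rho>'"
      by blast
  qed (simp_all add: W_finite_nonempty)
  also have "\<dots> \<le> k + (\<Sum>j<k. card X - 1)"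
  proof (intro add_mono sum_mono)
    show "card (\<rho> ` {..<k}) \<le> k"
      using card_image_le[of "{..<k}" \<rho>] by simp
    fix j assume "j \<in> {..<k}"
    then have "U j \<subseteq> X" and "U j \<noteq> X"
      using assms by auto
    then have "card (U j) < card X"
      using finite_X by (intro psubset_card_mono) auto
    then show "card (U j) \<le> card X - 1"
      by simp
  qed
  also have "\<dots> \<le> k * card X"
    using card_X_pos by (cases "card X") (auto simp: algebra_simps)
  finally show ?thesis .
qed

lemma card_X_add_n_le_if_spanning:
  assumes "j < k" and "U j = X"
  shows "card X + n \<le> 1 + (\<Sum>j<k. card (U j))"
proof -
  obtain u where "u \<in> U j"
    using atom_vertices_nonempty[OF graph atom_A[OF assms(1)]] by blast
  have "card X + n \<le> card {u} + (\<Sum>i<n. card (W i))"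
  proof (rule card_add_num_blocks_le)
    fix x assume "x \<in> X"
    then show "\<exists>\<rho>\<in>{u}. (in_common_block W n)\<^sup>*\<^sup>* x \<rho>"
      using U_linked_by_W[OF assms(1)] \<open>u \<in> U j\<close> assms(2) by blast
  qed (simp_all add: W_finite_nonempty)
  then show ?thesis
    by (simp add: sum_card_W_eq_sum_card_U)
qed

lemma card_X_add_n_le_if_shared_edge:
  assumes "j < k" and "U j = X" and "e \<in> E" and "1 < (\<Sum>i<n. B i (Inr e))"
  shows "card X + n \<le> (\<Sum>j<k. card (U j))"
proof -
  define I where "I = {i \<in> {..<n}. e \<in> atom_edges E (B i)}"
  have "(\<Sum>i<n. B i (Inr e)) = (\<Sum>i<n. of_bool (e \<in> atom_edges E (B i)))"
    using agg_atom_le_1[OF atom_B] assms(3)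
    by (intro sum.cong) (auto simp: atom_edges_def le_Suc_eq)
  then have "1 < card I"
    using assms(4) by (simp add: I_def Int_def)
  then obtain i where "i \<in> I"
    by fastforce
  then have "0 < card (I - {i})"
    using \<open>1 < card I\<close> by (simp add: card_Diff_singleton)
  then obtain l where "l \<in> I" and "l \<noteq> i"
    unfolding card_gt_0_iff by blast
  obtain u v where "r e = {u, v}" and "u \<noteq> v"
    using graph assms(3) by (auto simp: graph_def card_2_iff)
  then have uv: "u \<in> W m" "v \<in> W m" if "m \<in> I" for m
    using atom_edge_ends[OF graph atom_B] that by (auto simp: I_def)
  text \<open>Both ends of e lie in the blocks W i and W l; dropping v from W l keeps every
    link (through u and W i) but lowers the total block size by one.\<close>
  define W' where "W' = W(l := W l - {v})"
  obtain u0 where "u0 \<in> U j"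
    using atom_vertices_nonempty[OF graph atom_A[OF assms(1)]] by blast
  have "card X + n \<le> card {u0} + (\<Sum>m<n. card (W' m))"
  proof (rule card_add_num_blocks_le)
    fix x assume "x \<in> X"
    then have "(in_common_block W n)\<^sup>*\<^sup>* x u0"
      using U_linked_by_W[OF assms(1) _ \<open>u0 \<in> U j\<close>] assms(2) by simp
    moreover have "i < n" "l < n" "u \<in> W i" "v \<in> W i" "u \<in> W l"
      using \<open>i \<in> I\<close> \<open>l \<in> I\<close> uv by (auto simp: I_def)
    ultimately have "(in_common_block W' n)\<^sup>*\<^sup>* x u0"
      unfolding W'_def using \<open>l \<noteq> i\<close> \<open>u \<noteq> v\<close>
      by (intro in_common_block_remove_shared[of i n l]) simp_all
    then show "\<exists>\<rho>\<in>{u0}. (in_common_block W' n)\<^sup>*\<^sup>* x \<rho>"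
      by blast
  next
    fix m assume "m < n"
    then show "finite (W' m) \<and> W' m \<noteq> {}"
      using W_finite_nonempty uv[OF \<open>l \<in> I\<close>] \<open>u \<noteq> v\<close> by (auto simp: W'_def)
  qed simp
  also have "(\<Sum>m<n. card (W' m)) + 1 = (\<Sum>m<n. card (W m))"
  proof -
    have "l < n" and "v \<in> W l"
      using \<open>l \<in> I\<close> uv by (auto simp: I_def)
    then show ?thesis
      using W_finite_nonempty[of l]
      by (simp add: W'_def sum.remove[of "{..<n}" l] card_Diff_singleton card_gt_0_iff
          Suc_le_eq)
  qed
  ultimately show ?thesis
    by (simp add: sum_card_W_eq_sum_card_U)
qed

theorem num_atoms_le:
  assumes "0 < k"
  shows "n \<le> (k - 1) * card V + 1"
proof -
  have k_mult: "k * card X = (k - 1) * card X + card X"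
    using assms by (cases k) auto
  consider (spanning) j where "j < k" and "U j = X" | (not_spanning) "\<And>j. j < k \<Longrightarrow> U j \<noteq> X"
    by blast
  then have "n \<le> (k - 1) * card X + 1"
  proof cases
    case spanning
    then show ?thesis
      using card_X_add_n_le_if_spanning[OF spanning] sum_card_U_le k_mult by linarith
  next
    case not_spanning
    then show ?thesis
      using card_X_add_n_le_if_not_spanning[OF not_spanning] k_mult by linarith
  qed
  also have "\<dots> \<le> (k - 1) * card V + 1"
    using card_mono[OF finite_V X_subset_V] by simp
  finally show ?thesis .
qed

theorem num_atoms_eq_imp_spanning:
  assumes "2 \<le> k" and n: "n = (k - 1) * card V + 1"
  shows "\<forall>j<k. U j = V" and "\<forall>e\<in>E. (\<Sum>i<n. B i (Inr e)) \<le> 1"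
proof -
  have X_le_V: "(k - 1) * card X \<le> (k - 1) * card V"
    using card_mono[OF finite_V X_subset_V] by simp
  have k_mult: "k * c = (k - 1) * c + c" for c
    using assms(1) by (cases k) auto
  have "\<exists>j<k. U j = X"
  proof (rule ccontr)
    assume "\<not> ?thesis"
    then have "card X + n \<le> k * card X"
      by (intro card_X_add_n_le_if_not_spanning) blast
    then show False
      using X_le_V n k_mult[of "card X"] by linarith
  qed
  then obtain j where j: "j < k" "U j = X"
    by blast
  have bound: "card X + n \<le> 1 + (\<Sum>j<k. card (U j))"
    using card_X_add_n_le_if_spanning[OF j] .
  then have "(k - 1) * card V \<le> (k - 1) * card X"
    using sum_card_U_le n k_mult[of "card X"] by linarith
  then have "card V \<le> card X"
    using assms(1) by simp
  then have card_X: "card X = card V"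
    using card_mono[OF finite_V X_subset_V] by simp
  then have sum_U_ge: "k * card V \<le> (\<Sum>j<k. card (U j))"
    using bound n k_mult[of "card V"] by linarith
  have U_subset_V: "U j \<subseteq> V" for j
    by (auto simp: atom_vertices_def)
  show "\<forall>j<k. U j = V"
  proof (intro allI impI)
    fix j assume "j < k"
    show "U j = V"
    proof (rule ccontr)
      assume "U j \<noteq> V"
      then have "card (U j) < card V"
        using finite_V U_subset_V by (meson psubsetI psubset_card_mono)
      moreover have "card (U i) \<le> card V" for i
        using finite_V U_subset_V by (rule card_mono)
      ultimately have "(\<Sum>j<k. card (U j)) < (\<Sum>j<k. card V)"
        using \<open>j < k\<close> by (intro sum_strict_mono_ex1) auto
      then show False
        using sum_U_ge by simp
    qed
  qed
  show "\<forall>e\<in>E. (\<Sum>i<n. B i (Inr e)) \<le> 1"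
  proof (intro ballI leI notI)
    fix e assume "e \<in> E" and "1 < (\<Sum>i<n. B i (Inr e))"
    then have "card X + n \<le> (\<Sum>j<k. card (U j))"
      by (intro card_X_add_n_le_if_shared_edge[OF j]) simp_all
    then have "card X + n \<le> k * card X"
      using sum_card_U_le by linarith
    then show False
      using n card_X k_mult[of "card V"] by simp
  qed
qed

end

lemma sum_list_apply: "sum_list fs y = (\<Sum>f\<leftarrow>fs. f y)"
  by (induction fs) simp_all

lemma sum_list_apply_nth: "sum_list fs y = (\<Sum>i<length fs. (fs ! i) y)"
  by (induction fs) (simp_all add: sum.lessThan_Suc_shift del: sum.lessThan_Suc)

lemma atom_factorisations_of_lists:
  assumes "graph V E r" and "\<forall>f\<in>set As. agg_atom V E r f" and "\<forall>f\<in>set Bs. agg_atom V E r f"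
    and "sum_list As = sum_list Bs"
  shows "atom_factorisations V E r (length As) (nth As) (length Bs) (nth Bs)"
  using assms by unfold_locales (auto simp: sum_list_apply_nth[symmetric])

lemma agg_length_le:
  assumes "graph V E r" and "0 < k"
    and "k \<in> agg_lengths V E r a" and "m \<in> agg_lengths V E r a"
  shows "m \<le> (k - 1) * card V + 1"
proof -
  obtain As Bs where "length As = k" "\<forall>f\<in>set As. agg_atom V E r f" "sum_list As = a"
    and "length Bs = m" "\<forall>f\<in>set Bs. agg_atom V E r f" "sum_list Bs = a"
    using assms(3,4) unfolding agg_lengths_def by blast
  then show ?thesis
    using atom_factorisations.num_atoms_le[OF atom_factorisations_of_lists[OF assms(1)]] assms(2)
    by auto
qed

lemma disjoint_spanning_trees_if_spanning_atoms:
  assumes "graph V E r" and atoms: "\<forall>f\<in>set As. agg_atom V E r f"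
    and spanning: "\<forall>f\<in>set As. atom_vertices V f = V"
    and simple: "\<forall>e\<in>E. sum_list As (Inr e) \<le> 1"
  shows "has_k_edge_disjoint_spanning_trees V E r (length As)"
proof -
  let ?T = "\<lambda>j. atom_edges E (As ! j)"
  have "finite E"
    using assms(1) by (simp add: graph_def)
  have ex_tree: "\<exists>S. S \<subseteq> ?T j \<and> spanning_tree V E r S" if "j < length As" for j
  proof -
    have "finite (?T j)" and "?T j \<subseteq> E"
      using \<open>finite E\<close> by (auto simp: atom_edges_def)
    moreover have "connected_sub V r (?T j)"
      using atom_vertices_connected[OF assms(1), of "As ! j"] atoms spanning that
      by (simp add: connected_sub_def)
    ultimately show ?thesis
      using connected_sub_contains_spanning_tree by blast
  qed
  define S where "S j = (SOME S. S \<subseteq> ?T j \<and> spanning_tree V E r S)" for j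
  have S: "S j \<subseteq> ?T j \<and> spanning_tree V E r (S j)" if "j < length As" for j
    unfolding S_def using ex_tree[OF that] by (rule someI_ex)
  have "?T i \<inter> ?T j = {}" if "i < length As" and "j < length As" and "i \<noteq> j" for i j
  proof (rule ccontr)
    assume "?T i \<inter> ?T j \<noteq> {}"
    then obtain e where "e \<in> E" and "(As ! i) (Inr e) = 1" and "(As ! j) (Inr e) = 1"
      by (auto simp: atom_edges_def)
    moreover have "(\<Sum>l\<in>{i, j}. (As ! l) (Inr e)) \<le> (\<Sum>l<length As. (As ! l) (Inr e))"
      using that by (intro sum_mono2) auto
    ultimately show False
      using simple \<open>i \<noteq> j\<close> by (fastforce simp: sum_list_apply_nth)
  qed
  then show ?thesis
    unfolding has_k_edge_disjoint_spanning_trees_def using S by blast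
qed

lemma disjoint_spanning_trees_if_extremal_lengths:
  assumes "graph V E r" and "2 \<le> k"
    and "k \<in> agg_lengths V E r a" and "(k - 1) * card V + 1 \<in> agg_lengths V E r a"
  shows "has_k_edge_disjoint_spanning_trees V E r k"
proof -
  obtain As Bs where As: "length As = k" "\<forall>f\<in>set As. agg_atom V E r f" "sum_list As = a"
    and Bs: "length Bs = (k - 1) * card V + 1" "\<forall>f\<in>set Bs. agg_atom V E r f" "sum_list Bs = a"
    using assms(3,4) unfolding agg_lengths_def by blast
  interpret atom_factorisations V E r k "nth As" "(k - 1) * card V + 1" "nth Bs"
    using atom_factorisations_of_lists[OF assms(1) As(2) Bs(2)] As(1,3) Bs(1,3) by simp
  have "\<forall>f\<in>set As. atom_vertices V f = V"
    using num_atoms_eq_imp_spanning(1)[OF assms(2) refl] As(1) by (auto simp: in_set_conv_nth)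
  moreover have "\<forall>e\<in>E. sum_list As (Inr e) \<le> 1"
    using num_atoms_eq_imp_spanning(2)[OF assms(2) refl] Bs(1)
    by (simp add: As(3) Bs(3)[symmetric] sum_list_apply_nth)
  ultimately show ?thesis
    using disjoint_spanning_trees_if_spanning_atoms[OF assms(1) As(2)] As(1) by simp
qed

section \<open>Factorisations from edge-disjoint spanning trees\<close>

lemma sum_subgraph_indicators_disjoint:
  assumes "finite V" and "0 < k"
    and disjoint: "\<And>i j. i < k \<Longrightarrow> j < k \<Longrightarrow> i \<noteq> j \<Longrightarrow> T i \<inter> T j = {}"
  shows "(\<Sum>j<k. subgraph_indicator V (T j) y) =
    subgraph_indicator V (\<Union>j<k. T j) y + (k - 1) * (\<Sum>v\<in>V. subgraph_indicator {v} {} y)"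
proof (cases y)
  case (Inl x)
  have "(\<Sum>v\<in>V. of_bool (x \<in> {v})) = (\<Sum>v\<in>V. if v = x then 1 else (0 :: nat))"
    by (intro sum.cong) auto
  also have "\<dots> = of_bool (x \<in> V)"
    using assms(1) by simp
  finally have "(\<Sum>v\<in>V. of_bool (x \<in> {v})) = (of_bool (x \<in> V) :: nat)" .
  then show ?thesis
    using Inl assms(2) by (cases k) auto
next
  case (Inr e)
  have "{j \<in> {..<k}. e \<in> T j} = (if e \<in> (\<Union>j<k. T j) then {SOME j. j < k \<and> e \<in> T j} else {})"
    using disjoint by (auto intro: someI2_ex)
  then have "(\<Sum>j<k. of_bool (e \<in> T j)) = (of_bool (e \<in> (\<Union>j<k. T j)) :: nat)"
    by (simp add: Int_def)
  then show ?thesis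
    using Inr by simp
qed

lemma extremal_lengths_if_disjoint_spanning_trees:
  fixes V :: "'v set" and E :: "'e set"
  assumes "graph V E r" and "V \<noteq> {}" and "0 < k"
    and "has_k_edge_disjoint_spanning_trees V E r k"
  shows "\<exists>a. agglomeration V E r a \<and> k \<in> agg_lengths V E r a \<and>
    (k - 1) * card V + 1 \<in> agg_lengths V E r a"
proof -
  obtain T where T: "\<And>i. i < k \<Longrightarrow> spanning_tree V E r (T i)"
    and disjoint: "\<And>i j. i < k \<Longrightarrow> j < k \<Longrightarrow> i \<noteq> j \<Longrightarrow> T i \<inter> T j = {}"
    using assms(4) unfolding has_k_edge_disjoint_spanning_trees_def by blast
  have "finite V" and edges: "\<And>e. e \<in> E \<Longrightarrow> r e \<subseteq> V"
    using assms(1) by (auto simp: graph_def)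
  obtain vs where "set vs = V" and "distinct vs"
    using finite_distinct_list[OF \<open>finite V\<close>] by blast
  define As where "As = map (\<lambda>j. subgraph_indicator V (T j)) [0..<k]"
  define Bs where "Bs = subgraph_indicator V (\<Union>j<k. T j) #
    concat (replicate (k - 1) (map (\<lambda>v. subgraph_indicator {v} {}) vs))"
  have T_E: "T j \<subseteq> E" and T_connected: "connected_sub V r (T j)" if "j < k" for j
    using T[OF that] by (auto simp: spanning_tree_def)
  have "agg_atom V E r (subgraph_indicator V (T j))" if "j < k" for j
    using assms(1,2) T_E[OF that] T_connected[OF that] edges
    by (intro subgraph_indicator_atom) auto
  then have atoms_As: "\<forall>f\<in>set As. agg_atom V E r f"
    by (auto simp: As_def)
  have "T 0 \<subseteq> (\<Union>j<k. T j)"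
    using assms(3) by blast
  then have "connected_sub V r (\<Union>j<k. T j)"
    by (rule connected_sub_mono[OF _ T_connected[OF assms(3)]])
  moreover have "(\<Union>j<k. T j) \<subseteq> E"
    by (intro UN_least) (simp add: T_E)
  ultimately have "agg_atom V E r (subgraph_indicator V (\<Union>j<k. T j))"
    using edges by (intro subgraph_indicator_atom[OF assms(1) subset_refl assms(2)]) auto
  moreover have "agg_atom V E r (subgraph_indicator {v} {})" if "v \<in> V" for v
    using assms(1) that by (intro subgraph_indicator_atom) (auto simp: connected_sub_def)
  ultimately have atoms_Bs: "\<forall>f\<in>set Bs. agg_atom V E r f"
    using \<open>set vs = V\<close> by (auto simp: Bs_def)
  have sums_eq: "sum_list As = sum_list Bs"
  proof
    fix y
    have "sum_list (concat (replicate m fs)) y = m * sum_list fs y"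
      for m and fs :: "('v + 'e \<Rightarrow> nat) list"
      by (induction m) simp_all
    then have "sum_list Bs y = subgraph_indicator V (\<Union>j<k. T j) y +
      (k - 1) * sum_list (map (\<lambda>v. subgraph_indicator {v} {}) vs) y"
      by (simp add: Bs_def)
    also have "\<dots> = subgraph_indicator V (\<Union>j<k. T j) y +
      (k - 1) * (\<Sum>v\<in>V. subgraph_indicator {v} {} y)"
      using \<open>set vs = V\<close> \<open>distinct vs\<close>
      by (simp only: sum_list_apply map_map comp_def) (simp add: sum_list_distinct_conv_sum_set)
    finally
    show "sum_list As y = sum_list Bs y"
      using sum_subgraph_indicators_disjoint[OF \<open>finite V\<close> assms(3) disjoint]
      by (simp add: As_def sum_list_apply_nth)
  qed
  have "length Bs = (k - 1) * card V + 1"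
    using distinct_card[OF \<open>distinct vs\<close>] \<open>set vs = V\<close>
    by (simp add: Bs_def length_concat sum_list_replicate)
  then have "(k - 1) * card V + 1 \<in> agg_lengths V E r (sum_list As)"
    using atoms_Bs sums_eq unfolding agg_lengths_def by auto
  moreover have "k \<in> agg_lengths V E r (sum_list As)"
    using atoms_As unfolding agg_lengths_def by (intro CollectI exI[of _ As]) (simp add: As_def)
  moreover have "agglomeration V E r (sum_list As)"
    using atoms_As by (intro agglomeration_sum_list agg_atom_agglomeration) blast
  ultimately show ?thesis
    by blast
qed

section \<open>The refined elasticity\<close>

text \<open>The hypothesis 0 < N excludes A = {}, whose supremum is 0.\<close>

lemma Sup_enat_eq_iff_mem:
  fixes A :: "enat set"
  assumes "\<And>x. x \<in> A \<Longrightarrow> x \<le> enat N" and "0 < N"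
  shows "Sup A = enat N \<longleftrightarrow> enat N \<in> A"
proof
  assume "enat N \<in> A"
  then show "Sup A = enat N"
    using assms(1) by (intro antisym Sup_least Sup_upper)
next
  assume Sup: "Sup A = enat N"
  have "finite A"
    using finite_enat_bounded assms(1) by blast
  moreover have "A \<noteq> {}"
    using Sup assms(2) by (auto simp: bot_enat_def zero_enat_def)
  ultimately have "Sup A = Max A" and "Max A \<in> A"
    by (simp_all add: Sup_enat_def)
  then show "enat N \<in> A"
    using Sup by simp
qed

lemma agg_rho_le:
  assumes "\<And>a m. agglomeration V E r a \<Longrightarrow> k \<in> agg_lengths V E r a \<Longrightarrow>
      m \<in> agg_lengths V E r a \<Longrightarrow> m \<le> N"
  shows "agg_rho V E r k \<le> enat N"
  unfolding agg_rho_def by (auto intro!: Sup_least dest: assms)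

lemma agg_rho_eq_iff:
  assumes "\<And>a m. agglomeration V E r a \<Longrightarrow> k \<in> agg_lengths V E r a \<Longrightarrow>
      m \<in> agg_lengths V E r a \<Longrightarrow> m \<le> N"
    and "0 < N"
  shows "agg_rho V E r k = enat N \<longleftrightarrow>
    (\<exists>a. agglomeration V E r a \<and> k \<in> agg_lengths V E r a \<and> N \<in> agg_lengths V E r a)"
proof -
  have inner: "Sup (enat ` agg_lengths V E r a) = enat N \<longleftrightarrow> N \<in> agg_lengths V E r a"
    if "agglomeration V E r a" and "k \<in> agg_lengths V E r a" for a
  proof -
    have "x \<le> enat N" if "x \<in> enat ` agg_lengths V E r a" for x
      using that assms(1)[OF \<open>agglomeration V E r a\<close> \<open>k \<in> agg_lengths V E r a\<close>] by auto
    from Sup_enat_eq_iff_mem[OF this assms(2)] show ?thesis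
      by auto
  qed
  have "agg_rho V E r k = enat N \<longleftrightarrow>
    enat N \<in> {Sup (enat ` agg_lengths V E r a) | a.
      agglomeration V E r a \<and> k \<in> agg_lengths V E r a}"
    unfolding agg_rho_def
    by (rule Sup_enat_eq_iff_mem) (auto intro!: Sup_least dest: assms(1) simp: assms(2))
  also have "\<dots> \<longleftrightarrow> (\<exists>a. agglomeration V E r a \<and> k \<in> agg_lengths V E r a \<and>
      Sup (enat ` agg_lengths V E r a) = enat N)"
    by (auto simp: eq_commute[of "enat N"])
  finally show ?thesis
    using inner by auto
qed

theorem theorem4p15:
  fixes V :: "'v set" and E :: "'e set" and r :: "'e \<Rightarrow> 'v set" and k :: nat
  assumes "graph V E r" and "V \<noteq> {}" and "k \<ge> 2"
  shows "agg_rho V E r k \<le> enat ((k - 1) * card V + 1) \<and>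
         (agg_rho V E r k = enat ((k - 1) * card V + 1) \<longleftrightarrow>
           has_k_edge_disjoint_spanning_trees V E r k) \<and>
         (agg_rho V E r k = enat ((k - 1) * card V + 1) \<longrightarrow> edge_connectivity_ge V E r k)"
proof -
  let ?N = "(k - 1) * card V + 1"
  have bound: "m \<le> ?N" if "k \<in> agg_lengths V E r a" and "m \<in> agg_lengths V E r a" for a m
    using agg_length_le[OF assms(1) _ that] assms(3) by simp
  have "agg_rho V E r k = enat ?N \<longleftrightarrow>
      (\<exists>a. agglomeration V E r a \<and> k \<in> agg_lengths V E r a \<and> ?N \<in> agg_lengths V E r a)"
    using bound by (intro agg_rho_eq_iff) auto
  also have "\<dots> \<longleftrightarrow> has_k_edge_disjoint_spanning_trees V E r k"
    using disjoint_spanning_trees_if_extremal_lengths[OF assms(1,3)]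
      extremal_lengths_if_disjoint_spanning_trees[OF assms(1,2)] assms(3) by auto
  finally show ?thesis
    using agg_rho_le[of V E r k ?N] bound assms(1)
      edge_connectivity_ge_if_disjoint_spanning_trees[of E V r k]
    by (auto simp: graph_def)
qed

end
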